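(* Let $\mathcal{G}=(\mathcal{V},\mathcal{E},\mathcal{W})$ be an undirected weighted graph with negative-weight edge set $\mathcal{E}_-$ and positive-weight edge set $\mathcal{E}_+$, and assume $\mathcal{G}_+=(\mathcal{V},\mathcal{E}_+)$ (with its weights) is connected. If $L(\mathcal{G})$ is positive semi-definite, then $$\sum_{k\in\mathcal{E}_-}|\mathcal{W}(k)|^{-1}\ \ge\ \mathbf{R}_{tot}:=\operatorname{trace}\big(E_-^TL^{\dagger}(\mathcal{G}_+)E_-\big)=\sum_{k=(u_k,v_k)\in\mathcal{E}_-}\mathcal{R}_{u_kv_k}(\mathcal{G}_+),$$ where $E_-$ is the incidence matrix of the graph $(\mathcal{V},\mathcal{E}_-)$.
   Context: Weights $\mathcal{W}:\mathcal{E}\to\mathbb{R}\setminus\{0\}$; with an arbitrary edge orientation the incidence matrix has in the column of edge $(i,j)$ entry $+1$ in row $i$, $-1$ in row $j$, $0$ elsewhere; $L(\mathcal{G})=EWE^T$ with $W$ the diagonal weight matrix. $L^{\dagger}$ denotes the Moore–Penrose pseudo-inverse, and the effective resistance is $\mathcal{R}_{uv}(\mathcal{H})=(\mathbf{e}_u-\mathbf{e}_v)^TL^{\dagger}(\mathcal{H})(\mathbf{e}_u-\mathbf{e}_v)$ with $\mathbf{e}_u$ the standard basis vector of node $u$. *)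

theory Defs
  imports "HOL-Analysis.Analysis"
begin

text \<open>Vertices form a finite type 'n. Edges are given with an arbitrary orientation as
  ordered pairs (i,j); an edge set is a simple undirected graph with one chosen orientation.\<close>

definition oriented_simple_graph :: "('n \<times> 'n) set \<Rightarrow> bool" where
  "oriented_simple_graph E \<longleftrightarrow> (\<forall>(i,j)\<in>E. i \<noteq> j \<and> (j,i) \<notin> E)"

definition inc :: "'n \<times> 'n \<Rightarrow> 'n \<Rightarrow> real" where
  "inc e k = (if k = fst e then 1 else if k = snd e then -1 else 0)"

text \<open>Laplacian L = E W E^T, written out entrywise.\<close>
definition laplacian :: "('n::finite \<times> 'n) set \<Rightarrow> ('n \<times> 'n \<Rightarrow> real) \<Rightarrow> real^'n^'n" where
  "laplacian E W = (\<chi> i j. \<Sum>e\<in>E. inc e i * W e * inc e j)"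

definition psd :: "real^'n^'n \<Rightarrow> bool" where
  "psd A \<longleftrightarrow> (\<forall>x. 0 \<le> x \<bullet> (A *v x))"

definition pinv :: "real^'n^'n \<Rightarrow> real^'n^'n" where
  "pinv A = (THE X. A ** X ** A = A \<and> X ** A ** X = X \<and>
                    transpose (A ** X) = A ** X \<and> transpose (X ** A) = X ** A)"

definition eff_res :: "real^'n^'n \<Rightarrow> 'n \<Rightarrow> 'n \<Rightarrow> real" where
  "eff_res L u v = (axis u 1 - axis v 1) \<bullet> (pinv L *v (axis u 1 - axis v 1))"

definition graph_connected :: "('n \<times> 'n) set \<Rightarrow> bool" where
  "graph_connected E \<longleftrightarrow> (\<forall>u v. (u, v) \<in> (E \<union> E\<inverse>)\<^sup>*)"

end

theory Submission
  imports Defs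
begin

(* Write b_k for the incidence vector of an edge k and L_+ for the Laplacian
   of the positive part G_+.  The quadratic form of a Laplacian is a weighted sum of squares,
   x' L(G) x = sum_e W(e) (b_e' x)^2.  If L(G) is positive semidefinite, dropping every
   negative edge except k shows |W(k)| (b_k' x)^2 <= x' L_+ x for all x.  For a symmetric
   matrix L with Moore--Penrose inverse L^+ such a bound c (b' x)^2 <= x' L x gives
   b' L^+ b <= 1/c: put y = L^+ b, so y' L y = b' L^+ b =: r and c r^2 <= r.  Since
   R_{u_k v_k}(G_+) = b_k' L_+^+ b_k, summing over the negative edges proves the claim. *)

lemma matrix_diff_ldistrib: "(A::real^'n^'m) ** (B - C) = A ** B - A ** C"
  by (simp add: matrix_matrix_mult_def vec_eq_iff right_diff_distrib sum_subtractf)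

lemma matrix_diff_rdistrib: "((A::real^'n^'m) - B) ** C = A ** C - B ** C"
  by (simp add: matrix_matrix_mult_def vec_eq_iff left_diff_distrib sum_subtractf)

lemma matrix_add_rdistrib: "((A::real^'n^'m) + B) ** C = A ** C + B ** C"
  by (simp add: matrix_matrix_mult_def vec_eq_iff distrib_right sum.distrib)

lemma transpose_zero: "transpose (0::real^'n^'m) = 0"
  by (simp add: transpose_def vec_eq_iff)

lemma transpose_diff: "transpose ((A::real^'n^'m) - B) = transpose A - transpose B"
  by (simp add: transpose_def vec_eq_iff)

section \<open>The Moore--Penrose pseudo-inverse\<close>

definition penrose :: "real^'n^'n \<Rightarrow> real^'n^'n \<Rightarrow> bool" where
  "penrose A X \<longleftrightarrow> A ** X ** A = A \<and> X ** A ** X = X \<and>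
                    transpose (A ** X) = A ** X \<and> transpose (X ** A) = X ** A"

text \<open>Uniqueness: both solutions equal X A Y, by repeatedly using the symmetry equations.\<close>
lemma penrose_unique:
  fixes A X Y :: "real^'n^'n"
  assumes "penrose A X" "penrose A Y" shows "X = Y"
proof -
  have X1: "A ** X ** A = A" and X2: "X ** A ** X = X" and X3: "transpose (A ** X) = A ** X"
    and X4: "transpose (X ** A) = X ** A" using assms(1) unfolding penrose_def by auto
  have Y1: "A ** Y ** A = A" and Y2: "Y ** A ** Y = Y" and Y3: "transpose (A ** Y) = A ** Y"
    and Y4: "transpose (Y ** A) = Y ** A" using assms(2) unfolding penrose_def by auto
  have "X = X ** transpose (A ** X)" using X2 X3 by (simp add: matrix_mul_assoc)
  also have "\<dots> = X ** transpose X ** transpose (A ** Y ** A)"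
    using Y1 by (simp add: matrix_transpose_mul matrix_mul_assoc)
  also have "\<dots> = X ** transpose (A ** X) ** transpose (A ** Y)"
    by (simp add: matrix_transpose_mul matrix_mul_assoc)
  also have "\<dots> = X ** A ** Y" using X3 Y3 X2 by (metis matrix_mul_assoc)
  finally have XAY: "X = X ** A ** Y" .
  have "Y = transpose (Y ** A) ** Y" using Y2 Y4 by (simp add: matrix_mul_assoc)
  also have "\<dots> = transpose (A ** X ** A) ** transpose Y ** Y"
    using X1 by (simp add: matrix_transpose_mul matrix_mul_assoc)
  also have "\<dots> = transpose (X ** A) ** transpose (Y ** A) ** Y"
    by (simp add: matrix_transpose_mul matrix_mul_assoc)
  also have "\<dots> = X ** A ** Y" using X4 Y4 Y2 by (metis matrix_mul_assoc)
  finally show ?thesis using XAY by simp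
qed

text \<open>The orthogonal projection onto the kernel of A, as a symmetric idempotent matrix
  P = sum_b b b'/(b' b) over an orthogonal basis of the kernel.\<close>
lemma kernel_projection_exists:
  fixes A :: "real^'n^'m"
  obtains P :: "real^'n^'n" where "transpose P = P" "P ** P = P" "A ** P = 0"
    "\<And>x. A *v x = 0 \<Longrightarrow> P *v x = x"
proof -
  let ?K = "{x::real^'n. A *v x = 0}"
  have "subspace ?K"
    unfolding subspace_def by (auto simp: matrix_vector_right_distrib matrix_vector_mult_scaleR)
  then obtain T where Torth: "pairwise orthogonal T" and Tspan: "span T = ?K"
    by (rule orthogonal_basis_subspace)
  define P :: "real^'n^'n" where "P = (\<chi> i j. \<Sum>b\<in>T. b$i * b$j / (b \<bullet> b))"
  have Pv: "P *v x = (\<Sum>b\<in>T. (b \<bullet> x / (b \<bullet> b)) *\<^sub>R b)" for x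
  proof -
    have "(P *v x) $ i = (\<Sum>b\<in>T. (b \<bullet> x / (b \<bullet> b)) * b $ i)" for i
    proof -
      have "(P *v x) $ i = (\<Sum>j\<in>UNIV. \<Sum>b\<in>T. b$i * b$j / (b \<bullet> b) * x$j)"
        unfolding P_def matrix_vector_mult_def by (simp add: sum_distrib_right)
      also have "\<dots> = (\<Sum>b\<in>T. \<Sum>j\<in>UNIV. b$i * b$j / (b \<bullet> b) * x$j)"
        by (rule sum.swap)
      also have "\<dots> = (\<Sum>b\<in>T. (b \<bullet> x / (b \<bullet> b)) * b $ i)"
        by (simp add: inner_vec_def sum_divide_distrib sum_distrib_left mult_ac)
      finally show ?thesis .
    qed
    then show ?thesis by (simp add: vec_eq_iff)
  qed
  have PK: "P *v x \<in> ?K" for x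
    unfolding Pv using Tspan by (metis (no_types, lifting) span_base span_mul span_sum)
  have Pid: "P *v x = x" if "x \<in> ?K" for x
  proof -
    have "orthogonal y (x - P *v x)" if "y \<in> span T" for y
      unfolding Pv using Gram_Schmidt_step[OF Torth that] .
    moreover have "x - P *v x \<in> span T" using \<open>x \<in> ?K\<close> PK Tspan by (metis span_diff)
    ultimately have "orthogonal (x - P *v x) (x - P *v x)" by blast
    then show ?thesis by (simp add: orthogonal_def)
  qed
  show thesis
  proof
    show "transpose P = P" unfolding P_def by (simp add: transpose_def vec_eq_iff mult.commute)
    show "A ** P = 0"
      using PK by (intro matrix_eq[THEN iffD2]) (simp add: matrix_vector_mul_assoc[symmetric])
    show "P ** P = P"
      by (rule matrix_eq[THEN iffD2]) (simp add: matrix_vector_mul_assoc[symmetric], metis Pid PK)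
    show "\<And>x. A *v x = 0 \<Longrightarrow> P *v x = x" using Pid by blast
  qed
qed

text \<open>Existence for symmetric A: with P the kernel projection, A + P is invertible with
  inverse C, and X = C - P satisfies A X = X A = I - P, from which the equations follow.\<close>
lemma penrose_exists:
  fixes A :: "real^'n^'n"
  assumes sym: "transpose A = A"
  shows "\<exists>X. penrose A X"
proof -
  obtain P where Psym: "transpose P = P" and PP: "P ** P = P" and AP: "A ** P = 0"
    and Pid: "\<And>x. A *v x = 0 \<Longrightarrow> P *v x = x"
    using kernel_projection_exists[of A] by blast
  have PA: "P ** A = 0"
    using arg_cong[OF AP, of transpose] by (simp add: matrix_transpose_mul Psym sym transpose_zero)
  define B where "B = A + P"
  have "inj ((*v) B)"
  proof (rule injI)
    fix x y assume "B *v x = B *v y"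
    then have z: "B *v (x - y) = 0" by (simp add: matrix_vector_mult_diff_distrib)
    have "P *v (x - y) = (P ** B) *v (x - y)" unfolding B_def by (simp add: matrix_add_ldistrib PA PP)
    also have "\<dots> = 0" using z by (simp add: matrix_vector_mul_assoc[symmetric])
    finally have "P *v (x - y) = 0" .
    moreover have "A *v (x - y) = 0" using z calculation unfolding B_def
      by (simp add: matrix_vector_mult_add_rdistrib)
    ultimately show "x = y" using Pid[of "x - y"] by simp
  qed
  then obtain C where CB: "C ** B = mat 1"
    using matrix_left_invertible_injective by blast
  have BC: "B ** C = mat 1" using CB matrix_left_right_inverse by blast
  have CP: "C ** P = P"
    by (metis B_def CB matrix_add_rdistrib AP PP add_0 matrix_mul_assoc matrix_mul_lid)
  have PC: "P ** C = P"
    by (metis B_def BC matrix_add_ldistrib PA PP add_0 matrix_mul_assoc matrix_mul_rid)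
  have AB: "A = B - P" unfolding B_def by simp
  define X where "X = C - P"
  have AX: "A ** X = mat 1 - P"
    unfolding X_def matrix_diff_ldistrib AP by (simp add: AB matrix_diff_rdistrib BC PC)
  have XA: "X ** A = mat 1 - P"
    unfolding X_def matrix_diff_rdistrib PA by (simp add: AB matrix_diff_ldistrib CB CP)
  have "penrose A X"
    unfolding penrose_def
  proof (intro conjI)
    show "A ** X ** A = A" using AX by (simp add: matrix_diff_rdistrib PA)
    show "X ** A ** X = X"
      using XA by (simp add: matrix_diff_rdistrib X_def matrix_diff_ldistrib PC PP)
    show "transpose (A ** X) = A ** X" using AX by (simp add: transpose_diff Psym)
    show "transpose (X ** A) = X ** A" using XA by (simp add: transpose_diff Psym)
  qed
  then show ?thesis by blast
qed

lemma pinv_penrose: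
  fixes A :: "real^'n^'n"
  assumes "transpose A = A"
  shows "penrose A (pinv A)"
proof -
  have "\<exists>!X. penrose A X" using penrose_exists[OF assms] penrose_unique by blast
  then show ?thesis unfolding pinv_def penrose_def[symmetric] by (rule theI')
qed

text \<open>The pseudo-inverse of a symmetric matrix is symmetric, since its transpose also
  solves the Penrose equations.\<close>
lemma pinv_sym:
  fixes A :: "real^'n^'n"
  assumes sA: "transpose A = A"
  shows "transpose (pinv A) = pinv A"
proof -
  let ?X = "pinv A"
  have P: "penrose A ?X" by (rule pinv_penrose[OF sA])
  then have "penrose A (transpose ?X)"
    unfolding penrose_def
    by (metis sA matrix_transpose_mul matrix_mul_assoc transpose_transpose)
  then show ?thesis using P penrose_unique by blast
qed

text \<open>Rayleigh-type bound: if c (b' x)^2 <= x' L x for all x, then b' L^+ b <= 1/c.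
  With y = L^+ b one has y' L y = b' L^+ L L^+ b = r := b' L^+ b, hence c r^2 <= r.\<close>
lemma pinv_quadratic_le:
  fixes L :: "real^'n^'n" and b :: "real^'n" and c :: real
  assumes sym: "transpose L = L" and cpos: "c > 0"
    and bound: "\<And>x. c * (b \<bullet> x)^2 \<le> x \<bullet> (L *v x)"
  shows "b \<bullet> (pinv L *v b) \<le> 1 / c"
proof -
  let ?X = "pinv L"
  let ?r = "b \<bullet> (?X *v b)"
  have XLX: "?X ** L ** ?X = ?X" using pinv_penrose[OF sym] unfolding penrose_def by auto
  have "?X *v b = b v* ?X" by (metis pinv_sym[OF sym] vector_transpose_matrix)
  then have "(?X *v b) \<bullet> (L *v (?X *v b)) = b \<bullet> (?X *v (L *v (?X *v b)))"
    by (simp add: dot_lmul_matrix)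
  also have "\<dots> = ?r" using XLX by (simp add: matrix_vector_mul_assoc matrix_mul_assoc)
  finally have "c * ?r^2 \<le> ?r" using bound[of "?X *v b"] by simp
  have "c * ?r \<le> 1"
  proof (cases "?r > 0")
    case True
    then show ?thesis using \<open>c * ?r^2 \<le> ?r\<close> by (simp add: power2_eq_square mult.assoc)
  next
    case False
    then show ?thesis using cpos mult_nonneg_nonpos[of c ?r] by linarith
  qed
  then show ?thesis using cpos by (simp add: pos_le_divide_eq mult.commute)
qed

section \<open>Laplacians\<close>

definition incidence_vector :: "'n \<times> 'n \<Rightarrow> real^'n" where
  "incidence_vector e = (\<chi> i. inc e i)"

lemma incidence_vector_axis:
  "fst e \<noteq> snd e \<Longrightarrow> axis (fst e) 1 - axis (snd e) 1 = incidence_vector e"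
  unfolding incidence_vector_def inc_def by (auto simp: vec_eq_iff axis_def)

lemma laplacian_sym: "transpose (laplacian F W) = laplacian F W"
  unfolding laplacian_def transpose_def by (simp add: vec_eq_iff mult.commute mult.left_commute)

lemma laplacian_quadratic_form:
  fixes x :: "real^'n::finite"
  shows "x \<bullet> (laplacian F W *v x) = (\<Sum>e\<in>F. W e * (incidence_vector e \<bullet> x)^2)"
proof -
  have "x \<bullet> (laplacian F W *v x)
      = (\<Sum>i\<in>UNIV. \<Sum>j\<in>UNIV. \<Sum>e\<in>F. W e * (inc e i * x$i) * (inc e j * x$j))"
    unfolding inner_vec_def laplacian_def matrix_vector_mult_def
    by (simp add: sum_distrib_left sum_distrib_right mult_ac)
  also have "\<dots> = (\<Sum>i\<in>UNIV. \<Sum>e\<in>F. \<Sum>j\<in>UNIV. W e * (inc e i * x$i) * (inc e j * x$j))"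
    by (rule sum.cong[OF refl], rule sum.swap)
  also have "\<dots> = (\<Sum>e\<in>F. \<Sum>i\<in>UNIV. \<Sum>j\<in>UNIV. W e * (inc e i * x$i) * (inc e j * x$j))"
    by (rule sum.swap)
  also have "\<dots> = (\<Sum>e\<in>F. W e * (incidence_vector e \<bullet> x)^2)"
    unfolding incidence_vector_def inner_vec_def power2_eq_square
    by (simp add: sum_distrib_left sum_distrib_right mult_ac)
  finally show ?thesis .
qed

text \<open>If L(G) is positive semidefinite, each negative edge k is dominated by the positive
  part: |W(k)| (b_k' x)^2 <= x' L(G_+) x, since all other negative terms are <= 0.\<close>
lemma negative_edge_dominated:
  fixes E :: "('n::finite \<times> 'n) set" and W :: "'n \<times> 'n \<Rightarrow> real"
  assumes psd: "psd (laplacian E W)" and k: "k \<in> E" "W k < 0"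
  shows "\<bar>W k\<bar> * (incidence_vector k \<bullet> x)^2 \<le> x \<bullet> (laplacian {e\<in>E. W e > 0} W *v x)"
proof -
  let ?Ep = "{e\<in>E. W e > 0}"
  let ?g = "\<lambda>e. W e * (incidence_vector e \<bullet> x)^2"
  have "0 \<le> (\<Sum>e\<in>E. ?g e)"
    using psd unfolding psd_def laplacian_quadratic_form by blast
  also have "\<dots> = (\<Sum>e\<in>?Ep. ?g e) + ?g k + (\<Sum>e\<in>E - ?Ep - {k}. ?g e)"
    using k by (simp add: sum.subset_diff[of ?Ep E] sum.remove[of "E - ?Ep" k])
  also have "(\<Sum>e\<in>E - ?Ep - {k}. ?g e) \<le> 0"
    by (rule sum_nonpos) (auto simp: mult_nonpos_nonneg)
  finally show ?thesis using k(2) by (simp add: laplacian_quadratic_form)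
qed

theorem corollary3:
  fixes E :: "('n::finite \<times> 'n) set" and W :: "'n \<times> 'n \<Rightarrow> real"
  assumes "oriented_simple_graph E"
    and "\<forall>e\<in>E. W e \<noteq> 0"
    and "graph_connected {e\<in>E. W e > 0}"
    and "psd (laplacian E W)"
  shows "(\<Sum>e\<in>{e\<in>E. W e < 0}. 1 / \<bar>W e\<bar>)
           \<ge> (\<Sum>e\<in>{e\<in>E. W e < 0}. eff_res (laplacian {e\<in>E. W e > 0} W) (fst e) (snd e))"
proof (rule sum_mono)
  fix k assume "k \<in> {e\<in>E. W e < 0}"
  then have k: "k \<in> E" "W k < 0" by auto
  have "fst k \<noteq> snd k" using assms(1) k(1) unfolding oriented_simple_graph_def by auto
  moreover have "incidence_vector k \<bullet> (pinv (laplacian {e\<in>E. W e > 0} W) *v incidence_vector k)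
                   \<le> 1 / \<bar>W k\<bar>"
    using negative_edge_dominated[OF assms(4) k] k(2)
    by (intro pinv_quadratic_le laplacian_sym) auto
  ultimately show "eff_res (laplacian {e\<in>E. W e > 0} W) (fst k) (snd k) \<le> 1 / \<bar>W k\<bar>"
    unfolding eff_res_def by (simp add: incidence_vector_axis)
qed

end
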